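(* Consider adversarial training. On the event $\mathcal E$, for every iteration $t\le T$, every filter $r\in[m]$ and every noise patch $(i,j)$ with $i\in[N]$, $j\ne s(\mathbf X_i)$, the noise coefficient satisfies $\rho^{(t)}_{i,j,r}\le\dfrac{10\log^{1/3}T}{\sigma_n^2d}$.
   Context: Data. Fix integers $N,P,d,m$ and reals $\alpha,\sigma_n,\sigma_0,\eta,\epsilon,\Gamma>0$, $\delta\in(0,1)$, and a horizon $T\in\mathbb N$. Let $\mathbf u=\mathbf e_1$, $\mathbf v=\mathbf e_d$ and $\Pi_{\mathcal F}$ the orthogonal projection onto $\mathrm{span}\{\mathbf u,\mathbf v\}$. Fix a partition $[N]=\mathcal S_L\sqcup\mathcal S_U$, $p_{\mathrm{un}}=|\mathcal S_U|/N$. Independently for each $i$: $y_i$ uniform on $\{\pm1\}$, $s(\mathbf X_i)$ uniform on $[P]$, $\mathbf x_{i,s(\mathbf X_i)}=\alpha y_i\mathbf u$ if $i\in\mathcal S_L$ and $\alpha y_i\mathbf v$ if $i\in\mathcal S_U$, noise patches $\mathbf x_{i,p}\sim\mathcal N(\mathbf 0,\sigma_n^2(\mathbf I_d-\Pi_{\mathcal F}))$ for $p\ne s(\mathbf X_i)$, independent. Student $f_{\mathbf W}(\mathbf X)=\sum_{r=1}^m\sum_{p=1}^P[\phi(\langle\mathbf w_r,\mathbf x_p\rangle)-\phi(-\langle\mathbf w_r,\mathbf x_p\rangle)]$, $\phi(z)=(\max\{0,z\})^3$; $w^{(0)}_{r,j}\sim\mathcal N(0,\sigma_0^2)$ i.i.d.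 for $j<d$, $w^{(0)}_{r,d}=0$, $w_{r,d}=0$ maintained. $\ell(z)=\log(1+e^{-z})$, $\psi(z)=(1+e^{z})^{-1}$. $\tilde{\mathbf X}^{(t)}_i$ maximizes $\ell(y_if_{\mathbf W^{(t)}}(\mathbf X'))$ over $\|\mathbf X'-\mathbf X_i\|_\infty\le\epsilon$, $\mathbf X'-\mathbf X_i\in\mathrm{span}(\mathbf x_{i,s(\mathbf X_i)})$. Adversarial training: $\mathbf W^{(t+1)}=\mathbf W^{(t)}-\frac\eta N\sum_i\nabla_{\mathbf W}\ell(y_if_{\mathbf W}(\tilde{\mathbf X}^{(t)}_i))|_{\mathbf W^{(t)}}$ with $\tilde{\mathbf X}^{(t)}_i$ fixed. Noise coefficients: $\rho^{(0)}_{i,j,r}=0$ and $\rho^{(t+1)}_{i,j,r}-\rho^{(t)}_{i,j,r}=\frac{3\eta}{N}\psi(y_if_{\mathbf W^{(t)}}(\tilde{\mathbf X}^{(t)}_i))\langle\mathbf w^{(t)}_r,\mathbf x_{i,j}\rangle^2$ for $i\in[N]$, $j\ne s(\mathbf X_i)$, $r\in[m]$. Standing parameter conditions (for a sufficiently large universal constant $C>0$): (i) $T\ge CN/(\eta\sigma_0\sigma_n^3d^{3/2})$; (ii) $d\ge Cm^2P^2N^2\log^4(TNmP/\delta)$; (iii) $\alpha\ge C\sigma_n\sqrt d\log(TNmP/\delta)/(N^{1/3}(1-p_{\mathrm{un}})^{1/3})$; (iv) $\sigma_0\le C^{-1}\min\{\frac{1}{m^{2/3}P^{2/3}\sigma_n\sqrt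 d},\frac{1}{\alpha m^{2/3}},\frac{1}{\sigma_nm^2P^{1/2}d}\}/\log(TdNmP/\delta)$; (v) $\eta\le C^{-1}\min\{\frac1{\alpha^3\sigma_0},\frac1{\sigma_n^2d},\frac1{\alpha^2}\}/\log(TNmP/\delta)$; (vi) $C\sigma_nmP^{1/2}\log(TdNP/\delta)\le\epsilon<C^{-1}\min\{\alpha,\frac1{m\sigma_0d}\}$; (vii) either $p_{\mathrm{un}}=0$, or $C/N\le p_{\mathrm{un}}\le C^{-1}\log d/N$, and $N\ge CmP\log(TdNmP/\delta)$; (viii) $C\log(NP/\delta)\le m\le C\log^Cd$, $2\le P\le C$; (ix) $\Gamma\ge Cd$. Event $\mathcal E$: for all $r\in[m]$, $i,k\in[N]$, $j\ne s(\mathbf X_i)$, $q\ne s(\mathbf X_k)$, $(i,j)\ne(k,q)$: $\frac12\sigma_n^2d\le\|\mathbf x_{i,j}\|_2^2\le\frac32\sigma_n^2d$; $|\langle\mathbf x_{i,j},\mathbf x_{k,q}\rangle|\le2\sigma_n^2\sqrt{d\log(16N^2P^2/\delta)}$; $\|\mathbf x_{i,j}\|_\infty\le\sigma_n\sqrt{2\log(16dNP/\delta)}$; $\|\mathbf w_r^{(0)}\|_2\le2\sigma_0\sqrt d$; $|\langle\mathbf w^{(0)}_r,\mathbf e_1\rangle|\le\sigma_0\sqrt{2\log(16m/\delta)}$; $|\langle\mathbf w^{(0)}_r,\mathbf x_{i,j}\rangle|\le2\sigma_0\sigma_n\sqrt{d\log(16NmP/\delta)}$; $\frac12\sigma_0\le\max_r\langle\mathbf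 w^{(0)}_r,\mathbf e_1\rangle\le\sigma_0\sqrt{2\log(16m/\delta)}$; $\frac14\sigma_0\sigma_n\sqrt d\le\max_ry_i\langle\mathbf w^{(0)}_r,\mathbf x_{i,j}\rangle\le2\sigma_0\sigma_n\sqrt{d\log(16NmP/\delta)}$. *)

theory Defs
  imports "HOL-Analysis.Analysis"
begin

text \<open>Vectors in R^d are functions nat => real, only coordinates 1..d are
read (u = e_1 is coordinate 1, v = e_d is coordinate d). A data point X is a function
patch => coordinate => real with patches 1..P. Samples are indexed 1..N, filters 1..m.
Weights W :: filter => coordinate => real.\<close>

definition inner_d :: "nat \<Rightarrow> (nat \<Rightarrow> real) \<Rightarrow> (nat \<Rightarrow> real) \<Rightarrow> real" where
  "inner_d d a b = (\<Sum>k = 1..d. a k * b k)"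

definition phi :: "real \<Rightarrow> real" where
  "phi z = (max 0 z) ^ 3"

definition fnet :: "nat \<Rightarrow> nat \<Rightarrow> nat \<Rightarrow> (nat \<Rightarrow> nat \<Rightarrow> real) \<Rightarrow> (nat \<Rightarrow> nat \<Rightarrow> real) \<Rightarrow> real" where
  "fnet m P d W X = (\<Sum>r = 1..m. \<Sum>p = 1..P.
      phi (inner_d d (W r) (X p)) - phi (- inner_d d (W r) (X p)))"

definition logistic_loss :: "real \<Rightarrow> real" where
  "logistic_loss z = ln (1 + exp (- z))"

definition psi :: "real \<Rightarrow> real" where
  "psi z = 1 / (1 + exp z)"

definition grad_loss :: "nat \<Rightarrow> nat \<Rightarrow> nat \<Rightarrow> (nat \<Rightarrow> nat \<Rightarrow> real) \<Rightarrow> real \<Rightarrow>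
    (nat \<Rightarrow> nat \<Rightarrow> real) \<Rightarrow> nat \<Rightarrow> nat \<Rightarrow> real" where
  "grad_loss m P d W y X r k =
     deriv (\<lambda>c. logistic_loss (y * fnet m P d (W(r := (W r)(k := W r k + c))) X)) 0"

definition adv_feasible :: "nat \<Rightarrow> nat \<Rightarrow> real \<Rightarrow> nat \<Rightarrow> (nat \<Rightarrow> nat \<Rightarrow> real) \<Rightarrow>
    (nat \<Rightarrow> nat \<Rightarrow> real) \<Rightarrow> bool" where
  "adv_feasible P d eps s Xi X' \<longleftrightarrow>
     (\<forall>p\<in>{1..P}. \<forall>k\<in>{1..d}. \<bar>X' p k - Xi p k\<bar> \<le> eps) \<and>
     (\<exists>c::real. \<forall>p\<in>{1..P}. \<forall>k\<in>{1..d}.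
         X' p k - Xi p k = (if p = s then c * Xi s k else 0))"

definition is_adv_example :: "nat \<Rightarrow> nat \<Rightarrow> nat \<Rightarrow> real \<Rightarrow> (nat \<Rightarrow> nat \<Rightarrow> real) \<Rightarrow>
    real \<Rightarrow> nat \<Rightarrow> (nat \<Rightarrow> nat \<Rightarrow> real) \<Rightarrow> (nat \<Rightarrow> nat \<Rightarrow> real) \<Rightarrow> bool" where
  "is_adv_example m P d eps W y s Xi Xa \<longleftrightarrow>
     adv_feasible P d eps s Xi Xa \<and>
     (\<forall>X'. adv_feasible P d eps s Xi X' \<longrightarrow>
        logistic_loss (y * fnet m P d W X') \<le> logistic_loss (y * fnet m P d W Xa))"

definition adv_training ::
  "nat \<Rightarrow> nat \<Rightarrow> nat \<Rightarrow> nat \<Rightarrow> real \<Rightarrow> real \<Rightarrow> (nat \<Rightarrow> real) \<Rightarrow> (nat \<Rightarrow> nat) \<Rightarrow>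
   (nat \<Rightarrow> nat \<Rightarrow> nat \<Rightarrow> real) \<Rightarrow>
   (nat \<Rightarrow> nat \<Rightarrow> nat \<Rightarrow> real) \<Rightarrow> (nat \<Rightarrow> nat \<Rightarrow> nat \<Rightarrow> nat \<Rightarrow> real) \<Rightarrow> bool" where
  "adv_training N P d m eta eps y s X W Xa \<longleftrightarrow>
     (\<forall>r\<in>{1..m}. W 0 r d = 0) \<and>
     (\<forall>t. \<forall>i\<in>{1..N}. is_adv_example m P d eps (W t) (y i) (s i) (X i) (Xa t i)) \<and>
     (\<forall>t. \<forall>r\<in>{1..m}. \<forall>k.
        W (Suc t) r k = (if k = d then 0
          else W t r k - eta / real N * (\<Sum>i = 1..N. grad_loss m P d (W t) (y i) (Xa t i) r k)))"

primrec rho :: "nat \<Rightarrow> nat \<Rightarrow> nat \<Rightarrow> nat \<Rightarrow> real \<Rightarrow> (nat \<Rightarrow> real) \<Rightarrow> (nat \<Rightarrow> nat \<Rightarrow> nat \<Rightarrow> real) \<Rightarrow>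
    (nat \<Rightarrow> nat \<Rightarrow> nat \<Rightarrow> real) \<Rightarrow> (nat \<Rightarrow> nat \<Rightarrow> nat \<Rightarrow> nat \<Rightarrow> real) \<Rightarrow>
    nat \<Rightarrow> nat \<Rightarrow> nat \<Rightarrow> nat \<Rightarrow> real" where
  "rho N P d m eta y X W Xa 0 i j r = 0"
| "rho N P d m eta y X W Xa (Suc t) i j r =
     rho N P d m eta y X W Xa t i j r
     + 3 * eta / real N * psi (y i * fnet m P d (W t) (Xa t i))
         * (inner_d d (W t r) (X i j)) ^ 2"

definition data_model :: "nat \<Rightarrow> nat \<Rightarrow> nat \<Rightarrow> real \<Rightarrow> nat set \<Rightarrow> nat set \<Rightarrow>
    (nat \<Rightarrow> real) \<Rightarrow> (nat \<Rightarrow> nat) \<Rightarrow> (nat \<Rightarrow> nat \<Rightarrow> nat \<Rightarrow> real) \<Rightarrow> bool" where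
  "data_model N P d alpha SL SU y s X \<longleftrightarrow>
     SL \<union> SU = {1..N} \<and> SL \<inter> SU = {} \<and>
     (\<forall>i\<in>{1..N}. y i \<in> {-1, 1} \<and> s i \<in> {1..P}) \<and>
     (\<forall>i\<in>SL. \<forall>k\<in>{1..d}. X i (s i) k = alpha * y i * (if k = 1 then 1 else 0)) \<and>
     (\<forall>i\<in>SU. \<forall>k\<in>{1..d}. X i (s i) k = alpha * y i * (if k = d then 1 else 0)) \<and>
     (\<forall>i\<in>{1..N}. \<forall>p\<in>{1..P}. p \<noteq> s i \<longrightarrow> X i p 1 = 0 \<and> X i p d = 0)"

definition eventE :: "nat \<Rightarrow> nat \<Rightarrow> nat \<Rightarrow> nat \<Rightarrow> real \<Rightarrow> real \<Rightarrow> real \<Rightarrow>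
    (nat \<Rightarrow> real) \<Rightarrow> (nat \<Rightarrow> nat) \<Rightarrow> (nat \<Rightarrow> nat \<Rightarrow> nat \<Rightarrow> real) \<Rightarrow>
    (nat \<Rightarrow> nat \<Rightarrow> real) \<Rightarrow> bool" where
  "eventE N P d m sigma_n sigma_0 delta y s X W0 \<longleftrightarrow>
     (\<forall>i\<in>{1..N}. \<forall>j\<in>{1..P}. j \<noteq> s i \<longrightarrow>
        1/2 * sigma_n^2 * real d \<le> inner_d d (X i j) (X i j) \<and>
        inner_d d (X i j) (X i j) \<le> 3/2 * sigma_n^2 * real d \<and>
        (\<forall>k\<in>{1..d}. \<bar>X i j k\<bar> \<le> sigma_n * sqrt (2 * ln (16 * real d * real N * real P / delta))) \<and>
        (\<forall>r\<in>{1..m}. \<bar>inner_d d (W0 r) (X i j)\<bar>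
           \<le> 2 * sigma_0 * sigma_n * sqrt (real d * ln (16 * real N * real m * real P / delta))) \<and>
        1/4 * sigma_0 * sigma_n * sqrt (real d) \<le> Max ((\<lambda>r. y i * inner_d d (W0 r) (X i j)) ` {1..m}) \<and>
        Max ((\<lambda>r. y i * inner_d d (W0 r) (X i j)) ` {1..m})
           \<le> 2 * sigma_0 * sigma_n * sqrt (real d * ln (16 * real N * real m * real P / delta))) \<and>
     (\<forall>i\<in>{1..N}. \<forall>j\<in>{1..P}. \<forall>k\<in>{1..N}. \<forall>q\<in>{1..P}.
        j \<noteq> s i \<longrightarrow> q \<noteq> s k \<longrightarrow> (i, j) \<noteq> (k, q) \<longrightarrow>
        \<bar>inner_d d (X i j) (X k q)\<bar>
          \<le> 2 * sigma_n^2 * sqrt (real d * ln (16 * real N^2 * real P^2 / delta))) \<and>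
     (\<forall>r\<in>{1..m}.
        sqrt (inner_d d (W0 r) (W0 r)) \<le> 2 * sigma_0 * sqrt (real d) \<and>
        \<bar>W0 r 1\<bar> \<le> sigma_0 * sqrt (2 * ln (16 * real m / delta))) \<and>
     1/2 * sigma_0 \<le> Max ((\<lambda>r. W0 r 1) ` {1..m}) \<and>
     Max ((\<lambda>r. W0 r 1) ` {1..m}) \<le> sigma_0 * sqrt (2 * ln (16 * real m / delta))"

definition param_conditions :: "real \<Rightarrow> nat \<Rightarrow> nat \<Rightarrow> nat \<Rightarrow> nat \<Rightarrow> real \<Rightarrow> real \<Rightarrow> real \<Rightarrow>
    real \<Rightarrow> real \<Rightarrow> real \<Rightarrow> real \<Rightarrow> nat \<Rightarrow> real \<Rightarrow> bool" where
  "param_conditions C N P d m alpha sigma_n sigma_0 eta eps Gam delta T p_un \<longleftrightarrow>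
     (let L = ln (real T * real N * real m * real P / delta);
          Ld = ln (real T * real d * real N * real m * real P / delta) in
     real T \<ge> C * real N / (eta * sigma_0 * sigma_n^3 * real d powr (3/2)) \<and>
     real d \<ge> C * real m^2 * real P^2 * real N^2 * L^4 \<and>
     alpha \<ge> C * sigma_n * sqrt (real d) * L / (real N powr (1/3) * (1 - p_un) powr (1/3)) \<and>
     sigma_0 \<le> (1 / C) * min (min (1 / (real m powr (2/3) * real P powr (2/3) * sigma_n * sqrt (real d)))
                                   (1 / (alpha * real m powr (2/3))))
                              (1 / (sigma_n * real m^2 * sqrt (real P) * real d)) / Ld \<and>
     eta \<le> (1 / C) * min (min (1 / (alpha^3 * sigma_0)) (1 / (sigma_n^2 * real d))) (1 / alpha^2) / L \<and>
     C * sigma_n * real m * sqrt (real P) * ln (real T * real d * real N * real P / delta) \<le> eps \<and>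
     eps < (1 / C) * min alpha (1 / (real m * sigma_0 * real d)) \<and>
     (p_un = 0 \<or> (C / real N \<le> p_un \<and> p_un \<le> (1 / C) * ln (real d) / real N)) \<and>
     real N \<ge> C * real m * real P * Ld \<and>
     C * ln (real N * real P / delta) \<le> real m \<and> real m \<le> C * ln (real d) powr C \<and>
     2 \<le> P \<and> real P \<le> C \<and>
     Gam \<ge> C * real d)"

end

theory Submission
  imports Defs
begin

text \<open>
  Away from the two signal coordinates a gradient step moves a filter only along the noise
  patches, so there \<open>w\<^sub>r(t) = w\<^sub>r(0) + \<Sum> y\<^sub>k \<rho>\<^sub>k\<^sub>q\<^sub>r x\<^sub>k\<^sub>q\<close>; the first coordinate never decreases
  and the last one stays \<open>0\<close>. Since the noise patches are nearly orthogonal,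
  \<open>y\<^sub>i \<langle>w\<^sub>r(t), x\<^sub>i\<^sub>j\<rangle>\<close> equals \<open>\<rho>\<^sub>i\<^sub>j\<^sub>r \<parallel>x\<^sub>i\<^sub>j\<parallel>\<^sup>2\<close> up to small errors as long as all coefficients stay
  below \<open>B = 10 log\<^sup>1\<^sup>/\<^sup>3 T / (\<sigma>\<^sub>n\<^sup>2 d)\<close>. Under that hypothesis a coefficient below \<open>B/2\<close> grows by
  at most \<open>3\<eta>(16 log\<^sup>1\<^sup>/\<^sup>3 T)\<^sup>2 \<le> B/4\<close> per step, while a coefficient above \<open>B/2\<close> alone forces the
  margin \<open>y\<^sub>i f(X\<^sub>i) \<ge> 3 log T\<close>, hence \<open>\<psi> \<le> T\<^sup>-\<^sup>3\<close>, and the at most \<open>T\<close> steps spent above \<open>B/2\<close> add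
  less than \<open>B/4\<close> in total. By induction on \<open>t\<close>, every coefficient therefore stays below
  \<open>3B/4 + B/4 = B\<close>.
\<close>

section \<open>Network, loss and elementary bounds\<close>

lemma phi_sub_phi_neg: "phi z - phi (- z) = z ^ 3"
  by (cases "z \<ge> 0") (auto simp: phi_def max_def)

lemma fnet_eq_sum_cubes:
  "fnet m P d W X = (\<Sum>r = 1..m. \<Sum>p = 1..P. inner_d d (W r) (X p) ^ 3)"
  unfolding fnet_def phi_sub_phi_neg ..

lemma inner_d_cong:
  "(\<And>k. k \<in> {1..d} \<Longrightarrow> a k = a' k) \<Longrightarrow> (\<And>k. k \<in> {1..d} \<Longrightarrow> b k = b' k) \<Longrightarrow>
   inner_d d a b = inner_d d a' b'"
  unfolding inner_d_def by (rule sum.cong) auto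

lemma inner_d_self_nonneg: "0 \<le> inner_d d x x"
  unfolding inner_d_def by (simp add: sum_nonneg)

lemma inner_d_fun_upd:
  assumes "k \<in> {1..d}"
  shows "inner_d d (w(k := w k + c)) x = inner_d d w x + c * x k"
proof -
  have "inner_d d (w(k := w k + c)) x = (\<Sum>k'=1..d. w k' * x k' + (if k' = k then c * x k else 0))"
    unfolding inner_d_def by (rule sum.cong) (auto simp: algebra_simps)
  also have "\<dots> = inner_d d w x + c * x k"
    using assms by (simp add: sum.distrib inner_d_def)
  finally show ?thesis .
qed

lemma has_real_derivative_fnet_coord:
  assumes r: "r \<in> {1..m}" and k: "k \<in> {1..d}"
  shows "((\<lambda>c. fnet m P d (W(r := (W r)(k := W r k + c))) X) has_real_derivative
           (\<Sum>p = 1..P. 3 * inner_d d (W r) (X p) ^ 2 * X p k)) (at 0)"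
proof -
  define I where "I = (\<lambda>r' p. inner_d d (W r') (X p))"
  have fnet_upd: "fnet m P d (W(r := (W r)(k := W r k + c))) X =
      (\<Sum>r' = 1..m. \<Sum>p = 1..P. (I r' p + (if r' = r then c * X p k else 0)) ^ 3)" for c
    unfolding fnet_eq_sum_cubes I_def
    by (intro sum.cong refl) (auto simp: inner_d_fun_upd[OF k])
  have "((\<lambda>c. \<Sum>r' = 1..m. \<Sum>p = 1..P. (I r' p + (if r' = r then c * X p k else 0)) ^ 3)
      has_real_derivative
        (\<Sum>r' = 1..m. \<Sum>p = 1..P. 3 * (I r' p + 0) ^ 2 * (if r' = r then X p k else 0))) (at 0)"
    apply (intro DERIV_sum)
    subgoal for r' p
      by (cases "r' = r") (auto intro!: derivative_eq_intros)
    done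
  moreover have "(\<Sum>r' = 1..m. \<Sum>p = 1..P. 3 * (I r' p + 0) ^ 2 * (if r' = r then X p k else 0)) =
      (\<Sum>p = 1..P. 3 * I r p ^ 2 * X p k)"
  proof -
    have "(\<Sum>r' = 1..m. \<Sum>p = 1..P. 3 * (I r' p + 0) ^ 2 * (if r' = r then X p k else 0)) =
        (\<Sum>r' = 1..m. if r' = r then (\<Sum>p = 1..P. 3 * I r' p ^ 2 * X p k) else 0)"
      by (intro sum.cong refl) auto
    then show ?thesis using r by (simp add: sum.delta)
  qed
  ultimately show ?thesis unfolding fnet_upd I_def by simp
qed

lemma psi_pos: "0 < psi z"
  unfolding psi_def by (simp add: add_pos_pos)

lemma psi_le_one: "psi z \<le> 1"
  unfolding psi_def by (simp add: add_pos_pos)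

lemma psi_le_exp_neg: "psi z \<le> exp (- z)"
  unfolding psi_def by (simp add: exp_minus field_simps add_pos_pos)

lemma has_real_derivative_logistic_margin:
  assumes "(F has_real_derivative F') (at x)"
  shows "((\<lambda>c. logistic_loss (y * F c)) has_real_derivative - psi (y * F x) * y * F') (at x)"
proof -
  have "((\<lambda>c. logistic_loss (y * F c)) has_real_derivative
      1 / (1 + exp (- (y * F x))) * (exp (- (y * F x)) * (- (y * F')))) (at x)"
    unfolding logistic_loss_def
    by (rule derivative_eq_intros assms refl | simp add: add_pos_pos)+
  moreover have "1 / (1 + exp (- (y * F x))) * (exp (- (y * F x)) * (- (y * F'))) =
      - psi (y * F x) * y * F'"
    unfolding psi_def by (simp add: exp_minus field_simps add_pos_pos)
  ultimately show ?thesis by simp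
qed

lemma grad_loss_eq:
  assumes "r \<in> {1..m}" "k \<in> {1..d}"
  shows "grad_loss m P d W y X r k =
     - psi (y * fnet m P d W X) * y * (\<Sum>p = 1..P. 3 * inner_d d (W r) (X p) ^ 2 * X p k)"
  using DERIV_imp_deriv[OF has_real_derivative_logistic_margin[OF has_real_derivative_fnet_coord[OF assms]]]
  unfolding grad_loss_def by simp

lemma sqrt_le_self: "1 \<le> x \<Longrightarrow> sqrt x \<le> (x::real)"
proof -
  assume x: "1 \<le> x"
  have "sqrt x * 1 \<le> sqrt x * sqrt x" using x by (intro mult_left_mono) auto
  then show ?thesis using x by simp
qed

lemma sqrt_double_le: "2 \<le> x \<Longrightarrow> sqrt (2 * x) \<le> (x::real)"
proof -
  assume x: "2 \<le> x"
  have "2 * x \<le> x * x" using x by (intro mult_right_mono) auto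
  then have "sqrt (2 * x) \<le> sqrt (x * x)" by (rule real_sqrt_le_mono)
  then show ?thesis using x by simp
qed

lemma le_one_of_mult_le_one: "0 \<le> a \<Longrightarrow> 1 \<le> b \<Longrightarrow> a * b \<le> 1 \<Longrightarrow> a \<le> (1::real)"
proof -
  assume "0 \<le> a" "1 \<le> b" "a * b \<le> 1"
  then have "a * 1 \<le> a * b" by (intro mult_left_mono)
  then show ?thesis using \<open>a * b \<le> 1\<close> by simp
qed

lemma mult_le_one_of_scaled_bound:
  fixes a x Z C L :: real
  assumes "0 < C" "0 < L" "0 < Z" "a \<le> (1 / C) * x / L" "x \<le> 1 / Z"
  shows "a * (C * Z * L) \<le> 1"
proof -
  have "(1 / C) * x / L \<le> (1 / C) * (1 / Z) / L"
    using assms by (intro divide_right_mono mult_left_mono) auto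
  then have "a \<le> 1 / (C * Z * L)" using assms(4) by simp
  then show ?thesis using assms(1-3) by (simp add: pos_le_divide_eq)
qed

lemma sum_ge_one_large_term:
  fixes f :: "'a \<Rightarrow> real"
  assumes "finite A" "a \<in> A" "\<And>x. x \<in> A \<Longrightarrow> - E \<le> f x" "K \<le> f a" "0 \<le> E"
  shows "K - real (card A) * E \<le> sum f A"
proof -
  have "(\<Sum>x\<in>A - {a}. - E) \<le> sum f (A - {a})"
    using assms(3) by (intro sum_mono) auto
  moreover have "real (card (A - {a})) * E \<le> real (card A) * E"
    using assms(1,5) by (intro mult_right_mono) (auto simp: card_Diff1_le)
  moreover have "sum f A = f a + sum f (A - {a})"
    using assms(1,2) by (rule sum.remove)
  ultimately show ?thesis using assms(4) by simp
qed

lemma bounded_if_slow_above_half: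
  fixes a :: "nat \<Rightarrow> 'a \<Rightarrow> real"
  assumes start: "\<And>x. x \<in> I \<Longrightarrow> a 0 x = 0"
    and late: "0 \<le> e" "real T * e \<le> B / 4"
    and step: "\<And>t x. (\<And>x'. x' \<in> I \<Longrightarrow> a t x' \<le> B) \<Longrightarrow> x \<in> I \<Longrightarrow>
        a (Suc t) x \<le> a t x + (if a t x \<le> B / 2 then B / 4 else e)"
    and "t \<le> T" "x \<in> I"
  shows "a t x \<le> B"
proof -
  have invariant: "a t x \<le> 3/4 * B + real t * e" if "t \<le> T" "x \<in> I" for t x
    using that
  proof (induction t arbitrary: x)
    case 0
    have "0 \<le> real T * e" using late(1) by simp
    then have "0 \<le> B" using late(2) by linarith
    then show ?case using start[OF 0(2)] by simp
  next
    case (Suc t)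
    have "real t * e \<le> real T * e"
      using Suc.prems(1) late(1) by (intro mult_right_mono) auto
    then have bounded: "a t x' \<le> B" if "x' \<in> I" for x'
      using Suc.IH[of x'] Suc.prems(1) that late(2) by linarith
    have IH: "a t x \<le> 3/4 * B + real t * e" using Suc by simp
    have step_x: "a (Suc t) x \<le> a t x + (if a t x \<le> B / 2 then B / 4 else e)"
      by (rule step) (simp_all add: bounded Suc.prems(2))
    have "0 \<le> real t * e" using late(1) by simp
    moreover have "real (Suc t) * e = real t * e + e" by (simp add: algebra_simps)
    ultimately show ?case
      using step_x IH late(1) by (split if_split_asm) linarith+
  qed
  have "real t * e \<le> real T * e" using assms(5) late(1) by (intro mult_right_mono) auto
  then show ?thesis using invariant[OF assms(5,6)] late(2) by linarith
qed

section \<open>Consequences of the parameter conditions\<close>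

locale parameter_regime =
  fixes C :: real and N P d m :: nat and alpha sigma_n sigma_0 eta eps Gam delta :: real
    and T :: nat and p_un :: real
  assumes C_large: "10^12 \<le> C"
    and alpha_pos: "0 < alpha" and sigma_n_pos: "0 < sigma_n" and sigma_0_pos: "0 < sigma_0"
    and eta_pos: "0 < eta" and delta_pos: "0 < delta" and delta_lt_1: "delta < 1"
    and params: "param_conditions C N P d m alpha sigma_n sigma_0 eta eps Gam delta T p_un"
    and N_pos: "1 \<le> N"
begin

definition logL :: real where
  "logL = ln (real T * real N * real m * real P / delta)"

definition logLd :: real where
  "logLd = ln (real T * real d * real N * real m * real P / delta)"

lemma
  shows T_lower: "C * real N / (eta * sigma_0 * sigma_n^3 * real d powr (3/2)) \<le> real T"
    and d_lower: "C * real m^2 * real P^2 * real N^2 * logL^4 \<le> real d"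
    and sigma_0_upper: "sigma_0 \<le> (1 / C) * min (min
          (1 / (real m powr (2/3) * real P powr (2/3) * sigma_n * sqrt (real d)))
          (1 / (alpha * real m powr (2/3))))
        (1 / (sigma_n * real m^2 * sqrt (real P) * real d)) / logLd"
    and eta_upper: "eta \<le> (1 / C) * min (min (1 / (alpha^3 * sigma_0)) (1 / (sigma_n^2 * real d)))
        (1 / alpha^2) / logL"
    and eps_upper: "eps < (1 / C) * min alpha (1 / (real m * sigma_0 * real d))"
    and m_lower: "C * ln (real N * real P / delta) \<le> real m"
    and P_ge_2: "2 \<le> P"
    and P_le_C: "real P \<le> C"
  using params unfolding param_conditions_def Let_def logL_def[symmetric] logLd_def[symmetric]
  by auto

lemma C_pos: "0 < C"
  using C_large by simp

lemma m_pos: "1 \<le> m"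
proof -
  have "1 * 1 \<le> real N * real P" using N_pos P_ge_2 by (intro mult_mono) auto
  then have "1 < real N * real P / delta" using delta_pos delta_lt_1 by (simp add: field_simps)
  then have "0 < C * ln (real N * real P / delta)" using C_pos by simp
  then show ?thesis using m_lower by linarith
qed

text \<open>If \<open>d = 0\<close> or \<open>T = 0\<close>, then \<open>logLd = ln 0 = 0\<close> and division by zero turns the
  bound on \<open>sigma_0\<close> into \<open>sigma_0 \<le> 0\<close>.\<close>
lemma shows d_pos: "1 \<le> d" and T_pos: "1 \<le> T"
proof -
  have "1 \<le> d \<and> 1 \<le> T"
  proof (rule ccontr)
    assume "\<not> (1 \<le> d \<and> 1 \<le> T)"
    then have "d = 0 \<or> T = 0" by auto
    then have "logLd = 0" unfolding logLd_def by auto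
    then show False using sigma_0_upper sigma_0_pos by simp
  qed
  then show "1 \<le> d" "1 \<le> T" by auto
qed

lemma logL_ge_half: "1/2 \<le> logL"
proof -
  have "1 * 1 * 1 * 2 \<le> real T * real N * real m * real P"
    using T_pos N_pos m_pos P_ge_2 by (intro mult_mono) auto
  moreover have "2 * delta \<le> 2" using delta_lt_1 by simp
  ultimately have "2 \<le> real T * real N * real m * real P / delta"
    using delta_pos by (simp add: le_divide_eq)
  then have "ln 2 \<le> logL" unfolding logL_def by (intro ln_mono) auto
  then show ?thesis using ln2_ge_two_thirds by linarith
qed

lemma logL_le_logLd: "logL \<le> logLd"
proof -
  have "1 * (real T * real N * real m * real P) \<le> real d * (real T * real N * real m * real P)"
    using d_pos by (intro mult_right_mono) auto
  then have "real T * real N * real m * real P / delta \<le> real T * real d * real N * real m * real P / delta"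
    using delta_pos by (intro divide_right_mono) (auto simp: ac_simps)
  then show ?thesis
    unfolding logL_def logLd_def using T_pos N_pos m_pos P_ge_2 delta_pos by (intro ln_mono) auto
qed

lemma logLd_ge_half: "1/2 \<le> logLd"
  using logL_ge_half logL_le_logLd by linarith

lemma sigma_0_bound:
  "sigma_0 * (C * (sigma_n * real m^2 * sqrt (real P) * real d) * logLd) \<le> 1"
  by (rule mult_le_one_of_scaled_bound[OF C_pos _ _ sigma_0_upper])
    (use logLd_ge_half sigma_n_pos m_pos d_pos P_ge_2 in auto)

lemma alpha_sigma_0_bound: "sigma_0 * (C * (alpha * real m powr (2/3)) * logLd) \<le> 1"
  by (rule mult_le_one_of_scaled_bound[OF C_pos _ _ sigma_0_upper])
    (use logLd_ge_half alpha_pos m_pos in \<open>auto intro: min.coboundedI1\<close>)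

lemma eta_bound: "eta * (C * (sigma_n^2 * real d) * logL) \<le> 1"
  by (rule mult_le_one_of_scaled_bound[OF C_pos _ _ eta_upper])
    (use logL_ge_half sigma_n_pos d_pos in \<open>auto intro: min.coboundedI1\<close>)

lemma T_ge_C: "C \<le> real T"
proof -
  define K where "K = eta * sigma_0 * sigma_n^3 * real d powr (3/2)"
  have K_pos: "0 < K" unfolding K_def using eta_pos sigma_0_pos sigma_n_pos d_pos by simp
  have eta_scale: "eta * (sigma_n^2 * real d) \<le> 1"
  proof (rule le_one_of_mult_le_one)
    show "0 \<le> eta * (sigma_n^2 * real d)" using eta_pos by simp
    have "2 * (1/2) \<le> C * logL" using C_large logL_ge_half by (intro mult_mono) auto
    then show "1 \<le> C * logL" by simp
    show "eta * (sigma_n^2 * real d) * (C * logL) \<le> 1" using eta_bound by (simp only: ac_simps)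
  qed
  have sigma_0_scale: "sigma_0 * (sigma_n * real d) \<le> 1"
  proof (rule le_one_of_mult_le_one)
    show "0 \<le> sigma_0 * (sigma_n * real d)" using sigma_0_pos sigma_n_pos by simp
    have "2 * (1 * 1 * (1/2)) \<le> C * (real m^2 * sqrt (real P) * logLd)"
      using C_large logLd_ge_half m_pos P_ge_2 by (intro mult_mono) auto
    then show "1 \<le> C * (real m^2 * sqrt (real P) * logLd)" by simp
    show "sigma_0 * (sigma_n * real d) * (C * (real m^2 * sqrt (real P) * logLd)) \<le> 1"
      using sigma_0_bound by (simp only: ac_simps)
  qed
  have "real d powr (3/2) \<le> real d powr 2" using d_pos by (intro powr_mono) auto
  then have "K \<le> eta * sigma_0 * sigma_n^3 * real d powr 2"
    unfolding K_def using eta_pos sigma_0_pos sigma_n_pos by (intro mult_left_mono) auto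
  also have "\<dots> = (eta * (sigma_n^2 * real d)) * (sigma_0 * (sigma_n * real d))"
    by (simp add: powr_numeral algebra_simps power2_eq_square power3_eq_cube)
  also have "\<dots> \<le> 1"
    by (rule mult_le_one) (use eta_scale sigma_0_scale sigma_0_pos sigma_n_pos in auto)
  finally have "C * real N \<le> C * real N / K"
    using K_pos C_pos by (simp add: le_divide_eq mult_left_le)
  also have "\<dots> \<le> real T" using T_lower[folded K_def] .
  moreover have "C \<le> C * real N" using C_pos N_pos by simp
  ultimately show ?thesis by linarith
qed

lemma ln_T_ge_20: "20 \<le> ln (real T)"
proof -
  have "exp (20::real) = exp 1 ^ 20" using exp_of_nat_mult[of 20 "1::real"] by simp
  also have "\<dots> \<le> 3 ^ 20" using exp_le by (intro power_mono) auto
  also have "\<dots> \<le> real T" using C_large T_ge_C by simp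
  finally show ?thesis using T_pos by (subst ln_ge_iff) auto
qed

lemma ln_T_le_logL: "ln (real T) \<le> logL"
proof -
  have "1 * 1 * 1 \<le> real N * real m * real P" using N_pos m_pos P_ge_2 by (intro mult_mono) auto
  then have "real T * 1 / 1 \<le> real T * (real N * real m * real P) / delta"
    using delta_pos delta_lt_1 T_pos by (intro frac_le mult_left_mono) auto
  then show ?thesis unfolding logL_def using T_pos by (intro ln_mono) (auto simp: mult.assoc)
qed

lemma logL_ge_20: "20 \<le> logL"
  using ln_T_ge_20 ln_T_le_logL by linarith

lemma logLd_ge_20: "20 \<le> logLd"
  using logL_ge_20 logL_le_logLd by linarith

definition lnT_cbrt :: real where
  "lnT_cbrt = ln (real T) powr (1/3)"

lemma lnT_cbrt_cube: "lnT_cbrt ^ 3 = ln (real T)"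
proof -
  have "lnT_cbrt ^ 3 = ln (real T) powr (real 3 * (1/3))"
    unfolding lnT_cbrt_def using ln_T_ge_20 by (intro powr_power) simp
  then show ?thesis using ln_T_ge_20 by simp
qed

lemma lnT_cbrt_ge_2: "2 \<le> lnT_cbrt"
proof (rule ccontr)
  assume "\<not> 2 \<le> lnT_cbrt"
  then have "lnT_cbrt ^ 3 \<le> 2 ^ 3" unfolding lnT_cbrt_def by (intro power_mono) auto
  then show False using lnT_cbrt_cube ln_T_ge_20 by simp
qed

lemma lnT_cbrt_le_logL: "lnT_cbrt \<le> logL"
proof -
  have "1 * 1 \<le> lnT_cbrt * lnT_cbrt" using lnT_cbrt_ge_2 by (intro mult_mono) auto
  then have "lnT_cbrt * 1 \<le> lnT_cbrt * (lnT_cbrt * lnT_cbrt)"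
    using lnT_cbrt_ge_2 by (intro mult_left_mono) auto
  then show ?thesis using lnT_cbrt_cube ln_T_le_logL by (simp add: power3_eq_cube)
qed

lemma d_ge_2: "2 \<le> d"
proof -
  have "1 * 1 * 1 * 1 \<le> real m^2 * real P^2 * real N^2 * logL^4"
    using m_pos P_ge_2 N_pos logL_ge_20 by (intro mult_mono) auto
  then have "C \<le> C * real m^2 * real P^2 * real N^2 * logL^4"
    using C_pos by (simp add: mult.assoc)
  moreover have "2 \<le> C" using C_large by simp
  ultimately have "2 \<le> real d" using d_lower by linarith
  then show ?thesis by simp
qed

lemma eps_lt_alpha_div_C: "eps < alpha / C"
proof -
  have "(1 / C) * min alpha (1 / (real m * sigma_0 * real d)) \<le> (1 / C) * alpha"
    using C_pos by (intro mult_left_mono) auto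
  then show ?thesis using eps_upper by simp
qed

lemma ln_16_N2_P2_le: "ln (16 * real N^2 * real P^2 / delta) \<le> 2 * logL"
proof -
  have "(4::real)^2 \<le> real T^2" using T_ge_C C_large by (intro power_mono) auto
  then have "16 * real N^2 * real P^2 * 1 \<le> real T^2 * real N^2 * real P^2 * real m^2"
    using m_pos by (intro mult_mono) auto
  moreover have "1 / delta \<le> 1 / delta^2"
    using delta_pos delta_lt_1 by (intro divide_left_mono) (auto simp: power2_eq_square)
  ultimately have "16 * real N^2 * real P^2 * 1 * (1 / delta) \<le>
      real T^2 * real N^2 * real P^2 * real m^2 * (1 / delta^2)"
    by (rule mult_mono) (use delta_pos in auto)
  then have "16 * real N^2 * real P^2 / delta \<le> (real T * real N * real m * real P / delta)^2"
    by (simp add: power_mult_distrib power_divide field_simps)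
  then have "ln (16 * real N^2 * real P^2 / delta) \<le> ln ((real T * real N * real m * real P / delta)^2)"
    using N_pos P_ge_2 delta_pos by (intro ln_mono) auto
  also have "\<dots> = 2 * logL"
    unfolding logL_def using T_pos N_pos m_pos P_ge_2 delta_pos by (subst ln_realpow) auto
  finally show ?thesis .
qed

lemma ln_16_N_m_P_le: "ln (16 * real N * real m * real P / delta) \<le> logLd"
proof -
  have "16 * 1 \<le> real T * real d" using T_ge_C C_large d_pos by (intro mult_mono) auto
  then have "16 * (real N * real m * real P) \<le> real T * real d * (real N * real m * real P)"
    by (intro mult_right_mono) auto
  then have "16 * real N * real m * real P / delta \<le> real T * real d * real N * real m * real P / delta"
    using delta_pos by (intro divide_right_mono) (auto simp: mult.assoc)
  then show ?thesis unfolding logLd_def using N_pos P_ge_2 m_pos delta_pos by (intro ln_mono) auto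
qed

lemma ln_16_m_le: "ln (16 * real m / delta) \<le> logLd"
proof -
  have "16 * 1 * 1 * 1 \<le> real T * real d * real N * real P"
    using T_ge_C C_large d_pos N_pos P_ge_2 by (intro mult_mono) auto
  then have "16 * real m \<le> real T * real d * real N * real P * real m"
    using m_pos by (intro mult_right_mono) auto
  then have "16 * real m / delta \<le> real T * real d * real N * real m * real P / delta"
    using delta_pos by (intro divide_right_mono) (auto simp: ac_simps)
  then show ?thesis unfolding logLd_def using m_pos delta_pos by (intro ln_mono) auto
qed

lemma shows sqrt_C_ge: "10^6 \<le> sqrt C" and sqrt_C_le: "sqrt C \<le> C"
proof -
  have "sqrt ((10^6)^2) \<le> sqrt C" using C_large by (intro real_sqrt_le_mono) simp
  then show "10^6 \<le> sqrt C" by simp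
  show "sqrt C \<le> C" using C_large by (intro sqrt_le_self) simp
qed

lemma sqrt_d_lower: "sqrt C * real m * real P * real N * logL^2 \<le> sqrt (real d)"
proof -
  have "sqrt (C * (real m * real P * real N * logL^2)^2) \<le> sqrt (real d)"
    using d_lower by (intro real_sqrt_le_mono) (simp add: power_mult_distrib ac_simps flip: power_mult)
  then show ?thesis using C_pos by (simp add: real_sqrt_mult ac_simps)
qed

definition init_noise_bound :: real where
  "init_noise_bound = 2 * sigma_0 * sigma_n * sqrt (real d * ln (16 * real N * real m * real P / delta))"

definition noise_corr_bound :: real where
  "noise_corr_bound = 2 * sigma_n^2 * sqrt (real d * ln (16 * real N^2 * real P^2 / delta))"

definition init_signal_bound :: real where
  "init_signal_bound = sigma_0 * sqrt (2 * ln (16 * real m / delta))"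

definition rho_bound :: real where
  "rho_bound = 10 * lnT_cbrt / (sigma_n^2 * real d)"

lemma rho_bound_nonneg: "0 \<le> rho_bound"
  unfolding rho_bound_def using lnT_cbrt_ge_2 by simp

lemma noise_corr_bound_nonneg: "0 \<le> noise_corr_bound"
proof -
  have "1 * 1 * 1 \<le> real N^2 * real P^2 * (1 / delta)"
    using N_pos P_ge_2 delta_pos delta_lt_1 by (intro mult_mono) auto
  then show ?thesis unfolding noise_corr_bound_def by simp
qed

lemma init_noise_bound_le: "init_noise_bound \<le> 2 / (C * real m)"
proof -
  have "sqrt (real d * ln (16 * real N * real m * real P / delta)) \<le> sqrt (real d * logLd)"
    using ln_16_N_m_P_le by (intro real_sqrt_le_mono mult_left_mono) auto
  also have "\<dots> = sqrt (real d) * sqrt logLd" by (rule real_sqrt_mult)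
  also have "\<dots> \<le> sqrt (real d) * logLd"
    using sqrt_le_self[of logLd] logLd_ge_20 by (intro mult_left_mono) auto
  finally have "init_noise_bound \<le> 2 * (sigma_0 * sigma_n * sqrt (real d) * logLd)"
    unfolding init_noise_bound_def using sigma_0_pos sigma_n_pos by (simp add: mult_left_mono)
  also have "sigma_0 * sigma_n * sqrt (real d) * logLd * (C * real m) \<le> 1"
  proof -
    have "real m * 1 * 1 \<le> real m * real m * sqrt (real P)"
      using m_pos P_ge_2 by (intro mult_mono) auto
    then have "sqrt (real d) * real m \<le> real d * (real m^2 * sqrt (real P))"
      using sqrt_le_self[of "real d"] d_pos by (intro mult_mono) (auto simp: power2_eq_square)
    then have "(sigma_0 * sigma_n * logLd * C) * (sqrt (real d) * real m) \<le>
        (sigma_0 * sigma_n * logLd * C) * (real d * (real m^2 * sqrt (real P)))"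
      using sigma_0_pos sigma_n_pos logLd_ge_20 C_pos by (intro mult_left_mono) auto
    then show ?thesis using sigma_0_bound by (simp add: ac_simps)
  qed
  then have "2 * (sigma_0 * sigma_n * sqrt (real d) * logLd) \<le> 2 * (1 / (C * real m))"
    using C_pos m_pos by (simp add: pos_le_divide_eq)
  finally show ?thesis by simp
qed

lemma noise_corr_total_le: "real N * real P * rho_bound * noise_corr_bound \<le> 20 / (sqrt C * real m)"
proof -
  have "sqrt (real d * ln (16 * real N^2 * real P^2 / delta)) \<le> sqrt (real d * (2 * logL))"
    using ln_16_N2_P2_le by (intro real_sqrt_le_mono mult_left_mono) auto
  also have "\<dots> = sqrt (real d) * sqrt (2 * logL)" by (rule real_sqrt_mult)
  also have "\<dots> \<le> sqrt (real d) * logL"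
    using sqrt_double_le[of logL] logL_ge_20 by (intro mult_left_mono) auto
  finally have corr: "noise_corr_bound \<le> 2 * sigma_n^2 * (sqrt (real d) * logL)"
    unfolding noise_corr_bound_def using sigma_n_pos by (simp add: mult_left_mono)
  have "rho_bound * noise_corr_bound \<le> rho_bound * (2 * sigma_n^2 * (sqrt (real d) * logL))"
    using corr rho_bound_nonneg by (rule mult_left_mono)
  also have "\<dots> = 20 * lnT_cbrt * logL / sqrt (real d)"
  proof -
    have "real d = sqrt (real d) * sqrt (real d)" by simp
    then show ?thesis unfolding rho_bound_def using sigma_n_pos d_pos by (simp add: field_simps)
  qed
  also have "\<dots> \<le> 20 * logL * logL / sqrt (real d)"
    using lnT_cbrt_le_logL logL_ge_20 by (intro divide_right_mono mult_right_mono mult_left_mono) auto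
  also have "\<dots> \<le> 20 * logL * logL / (sqrt C * real m * real P * real N * logL^2)"
  proof (rule divide_left_mono)
    show "sqrt C * real m * real P * real N * logL^2 \<le> sqrt (real d)" by (rule sqrt_d_lower)
    show "0 \<le> 20 * logL * logL" using logL_ge_20 by simp
    show "0 < sqrt (real d) * (sqrt C * real m * real P * real N * logL^2)"
      using d_pos C_pos m_pos P_ge_2 N_pos logL_ge_20 by simp
  qed
  also have "\<dots> = 20 / (sqrt C * real m * real P * real N)"
    using logL_ge_20 by (simp add: power2_eq_square)
  finally have "real N * real P * (rho_bound * noise_corr_bound) \<le>
      real N * real P * (20 / (sqrt C * real m * real P * real N))"
    by (intro mult_left_mono) auto
  then show ?thesis using N_pos P_ge_2 by (simp add: field_simps)
qed

definition noise_slack :: real where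
  "noise_slack = 2 / (C * real m) + 20 / (sqrt C * real m)"

definition signal_slack :: real where
  "signal_slack = 2 / (C * real m powr (2/3))"

lemma shows noise_slack_le: "noise_slack \<le> 22 / (sqrt C * real m)"
  and noise_slack_nonneg: "0 \<le> noise_slack" and noise_slack_le_1: "noise_slack \<le> 1"
proof -
  have "2 / (C * real m) \<le> 2 / (sqrt C * real m)"
    using sqrt_C_ge sqrt_C_le m_pos C_pos by (intro divide_left_mono mult_right_mono) auto
  then show le: "noise_slack \<le> 22 / (sqrt C * real m)" unfolding noise_slack_def by simp
  show "0 \<le> noise_slack" unfolding noise_slack_def using C_pos by simp
  have "22 / (sqrt C * real m) \<le> 22 / (10^6 * 1)"
    using sqrt_C_ge m_pos C_pos by (intro divide_left_mono mult_mono) (auto intro: mult_pos_pos)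
  then show "noise_slack \<le> 1" using le by simp
qed

lemma signal_slack_nonneg: "0 \<le> signal_slack"
  unfolding signal_slack_def using C_pos by simp

lemma alpha_init_signal_le: "2 * alpha * init_signal_bound \<le> signal_slack"
proof -
  have "sqrt (2 * ln (16 * real m / delta)) \<le> sqrt (2 * logLd)"
    using ln_16_m_le by (intro real_sqrt_le_mono) auto
  also have "\<dots> \<le> logLd" using sqrt_double_le logLd_ge_20 by simp
  finally have "2 * alpha * init_signal_bound \<le> 2 * (alpha * sigma_0 * logLd)"
    unfolding init_signal_bound_def using alpha_pos sigma_0_pos by (simp add: mult_left_mono)
  also have "alpha * sigma_0 * logLd \<le> 1 / (C * real m powr (2/3))"
    using alpha_sigma_0_bound C_pos m_pos by (simp add: pos_le_divide_eq ac_simps)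
  then have "2 * (alpha * sigma_0 * logLd) \<le> 2 * (1 / (C * real m powr (2/3)))" by simp
  finally show ?thesis unfolding signal_slack_def by simp
qed

lemma slack_cubes_le: "real m * real P * (noise_slack ^ 3 + signal_slack ^ 3) \<le> 1"
proof -
  define q where "q = sqrt C"
  have q: "10^6 \<le> q" "q * q = C" "0 < q" unfolding q_def using sqrt_C_ge C_pos by auto
  have "real m * real P * noise_slack ^ 3 \<le> real m * real P * (22 / (q * real m)) ^ 3"
    unfolding q_def using noise_slack_le noise_slack_nonneg by (intro mult_left_mono power_mono) auto
  also have "\<dots> = 22^3 * real P / (q^3 * real m^2)"
    using m_pos q by (simp add: field_simps power3_eq_cube power2_eq_square)
  also have "\<dots> \<le> 22^3 * (q * q) / (q^3 * 1)"
    using m_pos q P_le_C by (intro divide_mono mult_left_mono mult_mono) auto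
  also have "\<dots> = 22^3 / q" using q(3) by (simp add: power3_eq_cube)
  also have "\<dots> \<le> 22^3 / 10^6" using q by (intro divide_left_mono) auto
  finally have noise: "real m * real P * noise_slack ^ 3 \<le> 22^3 / 10^6" .
  have "(real m powr (2/3)) ^ 3 = real m powr (real 3 * (2/3))"
    using m_pos by (intro powr_power) simp
  also have "\<dots> = real m ^ 2" using m_pos by simp
  finally have "(real m powr (2/3)) ^ 3 = real m ^ 2" .
  then have "real m * real P * signal_slack ^ 3 = 8 * real P / (C^3 * real m)"
    unfolding signal_slack_def using m_pos
    by (simp add: power_divide power_mult_distrib field_simps power2_eq_square)
  also have "\<dots> \<le> 8 * C / (C^3 * 1)"
    using m_pos C_pos P_le_C by (intro divide_mono mult_left_mono mult_mono) auto
  also have "\<dots> = 8 / C^2" using C_pos by (simp add: power2_eq_square power3_eq_cube)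
  also have "\<dots> \<le> 8 / 16"
    using C_large power_mono[of 4 C 2] by (intro divide_left_mono) auto
  finally have signal: "real m * real P * signal_slack ^ 3 \<le> 1/2" by simp
  show ?thesis using noise signal by (simp add: algebra_simps)
qed

definition late_increment :: real where
  "late_increment = 3 * eta * (16 * lnT_cbrt)^2 / real T ^ 3"

lemma early_increment_le: "3 * eta * (16 * lnT_cbrt)^2 \<le> rho_bound / 4"
proof -
  define D where "D = sigma_n^2 * real d"
  have D_pos: "0 < D" unfolding D_def using sigma_n_pos d_pos by simp
  have "3 * eta * (16 * lnT_cbrt)^2 * (4 * D) = 3072 * (eta * D * (lnT_cbrt * lnT_cbrt))"
    by (simp add: power2_eq_square algebra_simps)
  also have "\<dots> \<le> 3072 * (eta * D * (lnT_cbrt * logL))"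
    using lnT_cbrt_le_logL lnT_cbrt_ge_2 eta_pos D_pos by (intro mult_left_mono) auto
  also have "\<dots> = 3072 * lnT_cbrt * (eta * (C * D * logL)) / C"
    using C_pos by (simp add: field_simps)
  also have "\<dots> \<le> 3072 * lnT_cbrt / C"
    using eta_bound lnT_cbrt_ge_2 C_pos unfolding D_def
    by (intro divide_right_mono mult_left_mono[of _ 1, simplified]) auto
  also have "\<dots> \<le> 10 * lnT_cbrt"
    using C_large lnT_cbrt_ge_2 by (simp add: divide_le_eq)
  finally show ?thesis
    unfolding rho_bound_def D_def[symmetric] using D_pos by (simp add: le_divide_eq field_simps)
qed

lemma late_increment_nonneg: "0 \<le> late_increment"
  unfolding late_increment_def using eta_pos by simp

lemma late_increments_le: "real T * late_increment \<le> rho_bound / 4"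
proof -
  define Z where "Z = 3 * eta * (16 * lnT_cbrt)^2"
  have "real T * late_increment = Z / real T ^ 2"
    unfolding late_increment_def Z_def[symmetric] using T_pos
    by (simp add: power2_eq_square power3_eq_cube)
  also have "\<dots> \<le> Z / 1"
    unfolding Z_def using eta_pos T_pos by (intro divide_left_mono) (auto simp: one_le_power)
  finally show ?thesis using early_increment_le unfolding Z_def by simp
qed

end

section \<open>Dynamics of adversarial training\<close>

locale adv_training_run = parameter_regime +
  fixes SL SU :: "nat set" and y :: "nat \<Rightarrow> real" and s :: "nat \<Rightarrow> nat"
    and X :: "nat \<Rightarrow> nat \<Rightarrow> nat \<Rightarrow> real" and W :: "nat \<Rightarrow> nat \<Rightarrow> nat \<Rightarrow> real"
    and Xa :: "nat \<Rightarrow> nat \<Rightarrow> nat \<Rightarrow> nat \<Rightarrow> real"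
  assumes data: "data_model N P d alpha SL SU y s X"
    and event: "eventE N P d m sigma_n sigma_0 delta y s X (W 0)"
    and training: "adv_training N P d m eta eps y s X W Xa"
begin

lemma
  shows samples_split: "SL \<union> SU = {1..N}"
    and label_mem: "\<And>i. i \<in> {1..N} \<Longrightarrow> y i \<in> {-1, 1}"
    and signal_patch_mem: "\<And>i. i \<in> {1..N} \<Longrightarrow> s i \<in> {1..P}"
    and signal_patch_SL: "\<And>i k. i \<in> SL \<Longrightarrow> k \<in> {1..d} \<Longrightarrow>
      X i (s i) k = alpha * y i * (if k = 1 then 1 else 0)"
    and signal_patch_SU: "\<And>i k. i \<in> SU \<Longrightarrow> k \<in> {1..d} \<Longrightarrow>
      X i (s i) k = alpha * y i * (if k = d then 1 else 0)"
    and noise_patch_coord_1: "\<And>i p. i \<in> {1..N} \<Longrightarrow> p \<in> {1..P} \<Longrightarrow> p \<noteq> s i \<Longrightarrow> X i p 1 = 0"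
    and noise_patch_coord_d: "\<And>i p. i \<in> {1..N} \<Longrightarrow> p \<in> {1..P} \<Longrightarrow> p \<noteq> s i \<Longrightarrow> X i p d = 0"
  using data unfolding data_model_def by auto

lemma label_sq: "i \<in> {1..N} \<Longrightarrow> y i * y i = 1"
  using label_mem[of i] by auto

lemma label_abs: "i \<in> {1..N} \<Longrightarrow> \<bar>y i\<bar> = 1"
  using label_mem[of i] by auto

lemma SU_if_not_SL: "i \<in> {1..N} \<Longrightarrow> i \<notin> SL \<Longrightarrow> i \<in> SU"
  using samples_split by auto

lemma
  shows init_last_coord: "\<And>r. r \<in> {1..m} \<Longrightarrow> W 0 r d = 0"
    and adv_example: "\<And>t i. i \<in> {1..N} \<Longrightarrow>
      is_adv_example m P d eps (W t) (y i) (s i) (X i) (Xa t i)"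
    and weight_step: "\<And>t r k. r \<in> {1..m} \<Longrightarrow> W (Suc t) r k = (if k = d then 0
      else W t r k - eta / real N * (\<Sum>i = 1..N. grad_loss m P d (W t) (y i) (Xa t i) r k))"
  using training unfolding adv_training_def by auto

definition noise_patches :: "nat \<Rightarrow> nat set" where
  "noise_patches i = {j \<in> {1..P}. j \<noteq> s i}"

definition noise_idx :: "(nat \<times> nat) set" where
  "noise_idx = (SIGMA i:{1..N}. noise_patches i)"

lemma mem_noise_idx: "(i, j) \<in> noise_idx \<longleftrightarrow> i \<in> {1..N} \<and> j \<in> {1..P} \<and> j \<noteq> s i"
  unfolding noise_idx_def noise_patches_def by auto

lemma finite_noise_idx: "finite noise_idx"
  unfolding noise_idx_def noise_patches_def by auto

lemma card_noise_idx_le: "real (card noise_idx) \<le> real N * real P"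
proof -
  have "card noise_idx \<le> card ({1..N} \<times> {1..P})"
    by (rule card_mono) (auto simp: mem_noise_idx)
  then have "card noise_idx \<le> N * P" by simp
  then show ?thesis by (metis of_nat_le_iff of_nat_mult)
qed

lemma
  shows noise_norm_lower: "\<And>i j. (i, j) \<in> noise_idx \<Longrightarrow>
      1/2 * sigma_n^2 * real d \<le> inner_d d (X i j) (X i j)"
    and noise_norm_upper: "\<And>i j. (i, j) \<in> noise_idx \<Longrightarrow>
      inner_d d (X i j) (X i j) \<le> 3/2 * sigma_n^2 * real d"
    and init_noise_inner_le: "\<And>i j r. (i, j) \<in> noise_idx \<Longrightarrow> r \<in> {1..m} \<Longrightarrow>
      \<bar>inner_d d (W 0 r) (X i j)\<bar> \<le> init_noise_bound"
    and noise_corr_le: "\<And>i j k q. (i, j) \<in> noise_idx \<Longrightarrow> (k, q) \<in> noise_idx \<Longrightarrow> (i, j) \<noteq> (k, q) \<Longrightarrow>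
      \<bar>inner_d d (X i j) (X k q)\<bar> \<le> noise_corr_bound"
    and init_signal_le: "\<And>r. r \<in> {1..m} \<Longrightarrow> \<bar>W 0 r 1\<bar> \<le> init_signal_bound"
  using event
  unfolding eventE_def mem_noise_idx init_noise_bound_def noise_corr_bound_def init_signal_bound_def
  by (auto simp: mult.assoc)

lemma signal_coord_abs_eq_alpha:
  assumes i: "i \<in> {1..N}"
  shows "\<exists>k\<in>{1..d}. \<bar>X i (s i) k\<bar> = alpha"
proof (cases "i \<in> SL")
  case True
  have "\<bar>X i (s i) 1\<bar> = alpha"
    using signal_patch_SL[OF True, of 1] d_ge_2 label_abs[OF i] alpha_pos by (simp add: abs_mult)
  then show ?thesis using d_ge_2 by (intro bexI[of _ 1]) auto
next
  case False
  then have "i \<in> SU" using SU_if_not_SL i by blast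
  then have "\<bar>X i (s i) d\<bar> = alpha"
    using signal_patch_SU[of i d] d_ge_2 label_abs[OF i] alpha_pos by (simp add: abs_mult)
  then show ?thesis using d_ge_2 by (intro bexI[of _ d]) auto
qed

text \<open>The budget \<open>eps < alpha / C\<close> forces \<open>\<bar>c\<bar> < 1\<close>: the attack may shrink the signal patch
  but never flips its sign.\<close>
lemma adv_example_scales_signal:
  assumes i: "i \<in> {1..N}"
  shows "\<exists>c. \<bar>c\<bar> < 1 \<and> (\<forall>p\<in>{1..P}. \<forall>k\<in>{1..d}.
           Xa t i p k = (if p = s i then (1 + c) * X i (s i) k else X i p k))"
proof -
  have feasible: "adv_feasible P d eps (s i) (X i) (Xa t i)"
    using adv_example[OF i] unfolding is_adv_example_def by simp
  then obtain c where c: "\<forall>p\<in>{1..P}. \<forall>k\<in>{1..d}.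
      Xa t i p k - X i p k = (if p = s i then c * X i (s i) k else 0)"
    unfolding adv_feasible_def by blast
  have budget: "\<forall>p\<in>{1..P}. \<forall>k\<in>{1..d}. \<bar>Xa t i p k - X i p k\<bar> \<le> eps"
    using feasible unfolding adv_feasible_def by blast
  obtain k0 where k0: "k0 \<in> {1..d}" "\<bar>X i (s i) k0\<bar> = alpha"
    using signal_coord_abs_eq_alpha[OF i] by blast
  have "\<bar>c * X i (s i) k0\<bar> \<le> eps" using budget c signal_patch_mem[OF i] k0(1) by force
  then have "alpha * \<bar>c\<bar> < alpha * (1 / C)"
    using k0(2) eps_lt_alpha_div_C by (simp add: abs_mult mult.commute)
  then have "\<bar>c\<bar> < 1 / C" using alpha_pos by (simp only: mult_less_cancel_left_pos)
  also have "1 / C \<le> 1" using C_large by simp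
  finally have "\<bar>c\<bar> < 1" .
  moreover have "\<forall>p\<in>{1..P}. \<forall>k\<in>{1..d}.
      Xa t i p k = (if p = s i then (1 + c) * X i (s i) k else X i p k)"
    using c by (auto simp: algebra_simps)
  ultimately show ?thesis by blast
qed

definition adv_scale :: "nat \<Rightarrow> nat \<Rightarrow> real" where
  "adv_scale t i = (SOME c. \<bar>c\<bar> < 1 \<and> (\<forall>p\<in>{1..P}. \<forall>k\<in>{1..d}.
     Xa t i p k = (if p = s i then (1 + c) * X i (s i) k else X i p k)))"

lemma
  assumes "i \<in> {1..N}"
  shows adv_scale_abs_lt_1: "\<bar>adv_scale t i\<bar> < 1"
    and adv_example_coord: "\<And>p k. p \<in> {1..P} \<Longrightarrow> k \<in> {1..d} \<Longrightarrow>
      Xa t i p k = (if p = s i then (1 + adv_scale t i) * X i (s i) k else X i p k)"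
  using someI_ex[OF adv_example_scales_signal[OF assms, of t]]
  unfolding adv_scale_def[symmetric] by auto

lemma inner_adv_noise_patch:
  "i \<in> {1..N} \<Longrightarrow> p \<in> {1..P} \<Longrightarrow> p \<noteq> s i \<Longrightarrow> inner_d d w (Xa t i p) = inner_d d w (X i p)"
  by (rule inner_d_cong) (auto simp: adv_example_coord)

lemma inner_adv_signal_patch:
  assumes i: "i \<in> {1..N}"
  shows "inner_d d w (Xa t i (s i)) =
     (1 + adv_scale t i) * alpha * y i * (if i \<in> SL then w 1 else w d)"
proof -
  have "inner_d d w (Xa t i (s i)) = (\<Sum>k=1..d. w k * ((1 + adv_scale t i) * X i (s i) k))"
    unfolding inner_d_def using adv_example_coord[OF i signal_patch_mem[OF i]] by (intro sum.cong) auto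
  also have "\<dots> = (1 + adv_scale t i) * alpha * y i * (if i \<in> SL then w 1 else w d)"
  proof (cases "i \<in> SL")
    case True
    have "(\<Sum>k=1..d. w k * ((1 + adv_scale t i) * X i (s i) k))
       = (\<Sum>k=1..d. if k = 1 then (1 + adv_scale t i) * alpha * y i * w 1 else 0)"
      using signal_patch_SL[OF True] by (intro sum.cong) auto
    then show ?thesis using True d_ge_2 by (simp add: sum.delta)
  next
    case False
    then have "i \<in> SU" using SU_if_not_SL i by blast
    have "(\<Sum>k=1..d. w k * ((1 + adv_scale t i) * X i (s i) k))
       = (\<Sum>k=1..d. if k = d then (1 + adv_scale t i) * alpha * y i * w d else 0)"
      using signal_patch_SU[OF \<open>i \<in> SU\<close>] by (intro sum.cong) auto
    then show ?thesis using False d_ge_2 by (simp add: sum.delta')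
  qed
  finally show ?thesis .
qed

abbreviation loss_weight :: "nat \<Rightarrow> nat \<Rightarrow> real" where
  "loss_weight t i \<equiv> psi (y i * fnet m P d (W t) (Xa t i))"

abbreviation noise_coef :: "nat \<Rightarrow> nat \<Rightarrow> nat \<Rightarrow> nat \<Rightarrow> real" where
  "noise_coef \<equiv> rho N P d m eta y X W Xa"

lemma weight_step_eq:
  assumes r: "r \<in> {1..m}" and k: "k \<in> {1..d}" "k \<noteq> d"
  shows "W (Suc t) r k = W t r k + eta / real N * (\<Sum>i = 1..N. loss_weight t i * y i *
      (\<Sum>p = 1..P. 3 * inner_d d (W t r) (Xa t i p) ^ 2 * Xa t i p k))"
  using weight_step[OF r, of t k] k by (simp add: grad_loss_eq[OF r k(1)] sum_negf)

lemma weight_last_coord_zero: "r \<in> {1..m} \<Longrightarrow> W t r d = 0"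
  by (cases t) (auto simp: init_last_coord weight_step)

lemma noise_coef_nonneg: "0 \<le> noise_coef t i j r"
proof (induction t)
  case 0
  then show ?case by simp
next
  case (Suc t)
  have "0 \<le> 3 * eta / real N * loss_weight t i * inner_d d (W t r) (X i j) ^ 2"
    using eta_pos psi_pos[of "y i * fnet m P d (W t) (Xa t i)"] by simp
  then show ?case using Suc by simp
qed

lemma signal_patch_coord_zero:
  assumes i: "i \<in> {1..N}" and k: "k \<in> {1..d}" "k \<noteq> 1" "k \<noteq> d"
  shows "X i (s i) k = 0"
proof (cases "i \<in> SL")
  case True
  then show ?thesis using signal_patch_SL[OF True k(1)] k by simp
next
  case False
  then show ?thesis using signal_patch_SU[OF SU_if_not_SL[OF i False] k(1)] k by simp
qed

lemma update_sum_eq_noise_sum: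
  assumes i: "i \<in> {1..N}" and k: "k \<in> {1..d}" "k \<noteq> 1" "k \<noteq> d"
  shows "(\<Sum>p=1..P. 3 * inner_d d w (Xa t i p) ^ 2 * Xa t i p k) =
         (\<Sum>p\<in>noise_patches i. 3 * inner_d d w (X i p) ^ 2 * X i p k)"
proof (rule sum.mono_neutral_cong_right)
  show "finite {1..P}" by simp
  show "noise_patches i \<subseteq> {1..P}" unfolding noise_patches_def by auto
  show "\<forall>p\<in>{1..P} - noise_patches i. 3 * inner_d d w (Xa t i p) ^ 2 * Xa t i p k = 0"
    using adv_example_coord[OF i _ k(1)] signal_patch_coord_zero[OF i k]
    unfolding noise_patches_def by auto
  show "3 * inner_d d w (Xa t i p) ^ 2 * Xa t i p k = 3 * inner_d d w (X i p) ^ 2 * X i p k"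
    if "p \<in> noise_patches i" for p
    using that inner_adv_noise_patch[OF i] adv_example_coord[OF i _ k(1)]
    unfolding noise_patches_def by auto
qed

lemma weight_noise_expansion:
  assumes r: "r \<in> {1..m}" and k: "k \<in> {2..d}"
  shows "W t r k = W 0 r k + (\<Sum>(i,j)\<in>noise_idx. y i * noise_coef t i j r * X i j k)"
proof (induction t)
  case 0
  then show ?case by simp
next
  case (Suc t)
  show ?case
  proof (cases "k = d")
    case True
    have "(\<Sum>(i,j)\<in>noise_idx. y i * noise_coef (Suc t) i j r * X i j k) = 0"
      using True by (intro sum.neutral) (auto simp: mem_noise_idx noise_patch_coord_d)
    then show ?thesis using True init_last_coord[OF r] weight_step[OF r] by simp
  next
    case False
    have k1: "k \<in> {1..d}" "k \<noteq> 1" using k by auto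
    define incr where "incr i p = 3 * eta / real N * loss_weight t i * inner_d d (W t r) (X i p) ^ 2"
      for i p
    have "W (Suc t) r k = W t r k + eta / real N * (\<Sum>i = 1..N. loss_weight t i * y i *
        (\<Sum>p\<in>noise_patches i. 3 * inner_d d (W t r) (X i p) ^ 2 * X i p k))"
      unfolding weight_step_eq[OF r k1(1) False]
      using update_sum_eq_noise_sum[OF _ k1 False] by simp
    also have "eta / real N * (\<Sum>i = 1..N. loss_weight t i * y i *
        (\<Sum>p\<in>noise_patches i. 3 * inner_d d (W t r) (X i p) ^ 2 * X i p k)) =
        (\<Sum>i = 1..N. \<Sum>p\<in>noise_patches i. y i * incr i p * X i p k)"
      unfolding incr_def by (simp add: sum_distrib_left algebra_simps)
    also have "\<dots> = (\<Sum>(i,p)\<in>noise_idx. y i * incr i p * X i p k)"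
      unfolding noise_idx_def noise_patches_def by (subst sum.Sigma) auto
    finally have step: "W (Suc t) r k = W t r k + (\<Sum>(i,p)\<in>noise_idx. y i * incr i p * X i p k)" .
    have "(\<Sum>(i,j)\<in>noise_idx. y i * noise_coef (Suc t) i j r * X i j k) =
       (\<Sum>(i,j)\<in>noise_idx. y i * noise_coef t i j r * X i j k) +
       (\<Sum>(i,p)\<in>noise_idx. y i * incr i p * X i p k)"
      unfolding incr_def by (simp add: sum.distrib[symmetric] case_prod_beta algebra_simps)
    then show ?thesis using step Suc by simp
  qed
qed

lemma signed_adv_coord_1_nonneg:
  assumes i: "i \<in> {1..N}" and p: "p \<in> {1..P}"
  shows "0 \<le> y i * Xa t i p 1"
proof -
  have k: "(1::nat) \<in> {1..d}" using d_ge_2 by simp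
  show ?thesis
  proof (cases "p = s i")
    case True
    have pos: "0 < 1 + adv_scale t i" using adv_scale_abs_lt_1[OF i, of t] by linarith
    show ?thesis
    proof (cases "i \<in> SL")
      case SL: True
      have "y i * Xa t i p 1 = (1 + adv_scale t i) * alpha * (y i * y i)"
        using adv_example_coord[OF i p k] True signal_patch_SL[OF SL k] by simp
      then show ?thesis using label_sq[OF i] pos alpha_pos by simp
    next
      case False
      then show ?thesis
        using adv_example_coord[OF i p k] True signal_patch_SU[OF SU_if_not_SL[OF i False] k] d_ge_2
        by simp
    qed
  next
    case False
    then show ?thesis using adv_example_coord[OF i p k] noise_patch_coord_1[OF i p] by simp
  qed
qed

lemma weight_coord_1_mono:
  assumes r: "r \<in> {1..m}"
  shows "W t r 1 \<le> W (Suc t) r 1"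
proof -
  have k: "(1::nat) \<in> {1..d}" "1 \<noteq> d" using d_ge_2 by auto
  have "0 \<le> loss_weight t i * y i * (\<Sum>p = 1..P. 3 * inner_d d (W t r) (Xa t i p) ^ 2 * Xa t i p 1)"
    if i: "i \<in> {1..N}" for i
  proof -
    have "0 \<le> (\<Sum>p = 1..P. 3 * inner_d d (W t r) (Xa t i p) ^ 2 * (y i * Xa t i p 1))"
    proof (rule sum_nonneg)
      fix p assume "p \<in> {1..P}"
      then show "0 \<le> 3 * inner_d d (W t r) (Xa t i p) ^ 2 * (y i * Xa t i p 1)"
        by (intro mult_nonneg_nonneg[OF _ signed_adv_coord_1_nonneg[OF i]]) auto
    qed
    then have "0 \<le> loss_weight t i *
        (\<Sum>p = 1..P. 3 * inner_d d (W t r) (Xa t i p) ^ 2 * (y i * Xa t i p 1))"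
      using psi_pos less_imp_le by (intro mult_nonneg_nonneg) auto
    then show ?thesis by (simp add: sum_distrib_left algebra_simps)
  qed
  then have "0 \<le> eta / real N * (\<Sum>i = 1..N. loss_weight t i * y i *
      (\<Sum>p = 1..P. 3 * inner_d d (W t r) (Xa t i p) ^ 2 * Xa t i p 1))"
    using eta_pos by (intro mult_nonneg_nonneg[of "eta / real N"] sum_nonneg) auto
  then show ?thesis unfolding weight_step_eq[OF r k] by simp
qed

lemma weight_coord_1_ge_init:
  assumes r: "r \<in> {1..m}"
  shows "W 0 r 1 \<le> W t r 1"
proof (induction t)
  case (Suc t)
  then show ?case using weight_coord_1_mono[OF r, of t] by linarith
qed simp

lemma inner_weight_noise_patch:
  assumes ij: "(i, j) \<in> noise_idx" and r: "r \<in> {1..m}"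
  shows "inner_d d (W t r) (X i j) = inner_d d (W 0 r) (X i j) +
     (\<Sum>(k,q)\<in>noise_idx. y k * noise_coef t k q r * inner_d d (X k q) (X i j))"
proof -
  have ij': "i \<in> {1..N}" "j \<in> {1..P}" "j \<noteq> s i" using ij mem_noise_idx by auto
  define v where "v k' = (\<Sum>(k,q)\<in>noise_idx. y k * noise_coef t k q r * X k q k')" for k'
  have "inner_d d (W t r) (X i j) = (\<Sum>k'=1..d. (W 0 r k' + v k') * X i j k')"
    unfolding inner_d_def v_def
  proof (intro sum.cong refl)
    fix k' assume "k' \<in> {1..d}"
    then show "W t r k' * X i j k' =
        (W 0 r k' + (\<Sum>(k,q)\<in>noise_idx. y k * noise_coef t k q r * X k q k')) * X i j k'"
      using weight_noise_expansion[OF r, of k' t] noise_patch_coord_1[OF ij'] by (cases "k' = 1") auto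
  qed
  also have "\<dots> = inner_d d (W 0 r) (X i j) + (\<Sum>k'=1..d. v k' * X i j k')"
    unfolding inner_d_def by (simp add: sum.distrib distrib_right)
  also have "(\<Sum>k'=1..d. v k' * X i j k') =
      (\<Sum>(k,q)\<in>noise_idx. \<Sum>k'=1..d. y k * noise_coef t k q r * X k q k' * X i j k')"
    unfolding v_def sum_distrib_right by (subst sum.swap) (simp add: case_prod_beta)
  also have "\<dots> = (\<Sum>(k,q)\<in>noise_idx. y k * noise_coef t k q r * inner_d d (X k q) (X i j))"
    unfolding inner_d_def by (intro sum.cong refl) (auto simp: sum_distrib_left algebra_simps)
  finally show ?thesis .
qed

definition cross_term :: "nat \<Rightarrow> nat \<Rightarrow> nat \<Rightarrow> nat \<Rightarrow> real" where
  "cross_term t i j r =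
     (\<Sum>(k,q)\<in>noise_idx - {(i,j)}. y i * y k * noise_coef t k q r * inner_d d (X k q) (X i j))"

lemma signed_inner_weight_noise_patch:
  assumes ij: "(i, j) \<in> noise_idx" and r: "r \<in> {1..m}"
  shows "y i * inner_d d (W t r) (X i j) = y i * inner_d d (W 0 r) (X i j) +
     noise_coef t i j r * inner_d d (X i j) (X i j) + cross_term t i j r"
proof -
  have i: "i \<in> {1..N}" using ij mem_noise_idx by auto
  have "y i * inner_d d (W t r) (X i j) = y i * inner_d d (W 0 r) (X i j) +
     (\<Sum>(k,q)\<in>noise_idx. y i * y k * noise_coef t k q r * inner_d d (X k q) (X i j))"
    unfolding inner_weight_noise_patch[OF ij r, of t] distrib_left sum_distrib_left
    by (simp add: case_prod_beta mult.assoc)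
  also have "(\<Sum>(k,q)\<in>noise_idx. y i * y k * noise_coef t k q r * inner_d d (X k q) (X i j)) =
      y i * y i * noise_coef t i j r * inner_d d (X i j) (X i j) + cross_term t i j r"
    unfolding cross_term_def by (subst sum.remove[OF finite_noise_idx ij]) simp
  finally show ?thesis using label_sq[OF i] by simp
qed

definition noise_coefs_bounded :: "nat \<Rightarrow> bool" where
  "noise_coefs_bounded t \<longleftrightarrow>
     (\<forall>k q r. (k, q) \<in> noise_idx \<longrightarrow> r \<in> {1..m} \<longrightarrow> noise_coef t k q r \<le> rho_bound)"

lemma cross_term_abs_le:
  assumes H: "noise_coefs_bounded t" and ij: "(i, j) \<in> noise_idx" and r: "r \<in> {1..m}"
  shows "\<bar>cross_term t i j r\<bar> \<le> 20 / (sqrt C * real m)"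
proof -
  have i: "i \<in> {1..N}" using ij mem_noise_idx by auto
  have term_le: "(case x of (k, q) \<Rightarrow> \<bar>y i * y k * noise_coef t k q r * inner_d d (X k q) (X i j)\<bar>) \<le>
      rho_bound * noise_corr_bound"
    if x: "x \<in> noise_idx - {(i, j)}" for x
  proof -
    obtain k q where kq: "x = (k, q)" by (cases x)
    have k: "k \<in> {1..N}" "(k, q) \<in> noise_idx" "(k, q) \<noteq> (i, j)" using x kq mem_noise_idx by auto
    have "\<bar>y i * y k * noise_coef t k q r * inner_d d (X k q) (X i j)\<bar> =
        noise_coef t k q r * \<bar>inner_d d (X k q) (X i j)\<bar>"
      using label_abs[OF i] label_abs[OF k(1)] noise_coef_nonneg[of t k q r] by (simp add: abs_mult)
    also have "\<dots> \<le> rho_bound * noise_corr_bound"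
      using H k r noise_corr_le[OF k(2) ij k(3)] noise_coef_nonneg[of t k q r] rho_bound_nonneg
      unfolding noise_coefs_bounded_def by (intro mult_mono) auto
    finally show ?thesis using kq by simp
  qed
  have "\<bar>cross_term t i j r\<bar> \<le>
      (\<Sum>(k,q)\<in>noise_idx - {(i,j)}. \<bar>y i * y k * noise_coef t k q r * inner_d d (X k q) (X i j)\<bar>)"
    unfolding cross_term_def by (rule order_trans[OF sum_abs]) (simp add: case_prod_beta)
  also have "\<dots> \<le> real (card (noise_idx - {(i,j)})) * (rho_bound * noise_corr_bound)"
    by (rule sum_bounded_above) (rule term_le)
  also have "\<dots> \<le> real N * real P * (rho_bound * noise_corr_bound)"
  proof (rule mult_right_mono)
    have "card (noise_idx - {(i,j)}) \<le> card noise_idx" by (rule card_Diff1_le)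
    then show "real (card (noise_idx - {(i,j)})) \<le> real N * real P"
      using card_noise_idx_le by linarith
    show "0 \<le> rho_bound * noise_corr_bound"
      using rho_bound_nonneg noise_corr_bound_nonneg by simp
  qed
  also have "\<dots> \<le> 20 / (sqrt C * real m)" using noise_corr_total_le by (simp add: mult.assoc)
  finally show ?thesis .
qed

lemma signed_inner_noise_lower:
  assumes H: "noise_coefs_bounded t" and ij: "(i, j) \<in> noise_idx" and r: "r \<in> {1..m}"
  shows "noise_coef t i j r * inner_d d (X i j) (X i j) - noise_slack \<le> y i * inner_d d (W t r) (X i j)"
proof -
  have i: "i \<in> {1..N}" using ij mem_noise_idx by auto
  have "\<bar>y i * inner_d d (W 0 r) (X i j)\<bar> \<le> init_noise_bound"
    using init_noise_inner_le[OF ij r] label_abs[OF i] by (simp add: abs_mult)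
  then have "- (2 / (C * real m)) \<le> y i * inner_d d (W 0 r) (X i j)"
    using init_noise_bound_le by linarith
  moreover have "- (20 / (sqrt C * real m)) \<le> cross_term t i j r"
    using cross_term_abs_le[OF H ij r] by linarith
  ultimately show ?thesis
    using signed_inner_weight_noise_patch[OF ij r, of t] unfolding noise_slack_def by linarith
qed

lemma inner_noise_abs_le:
  assumes H: "noise_coefs_bounded t" and ij: "(i, j) \<in> noise_idx" and r: "r \<in> {1..m}"
  shows "\<bar>inner_d d (W t r) (X i j)\<bar> \<le> 16 * lnT_cbrt"
proof -
  have i: "i \<in> {1..N}" using ij mem_noise_idx by auto
  have init: "\<bar>y i * inner_d d (W 0 r) (X i j)\<bar> \<le> 2 / (C * real m)"
    using init_noise_inner_le[OF ij r] label_abs[OF i] init_noise_bound_le by (simp add: abs_mult)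
  have cross: "\<bar>cross_term t i j r\<bar> \<le> 20 / (sqrt C * real m)" by (rule cross_term_abs_le[OF H ij r])
  have "noise_coef t i j r * inner_d d (X i j) (X i j) \<le> rho_bound * (3/2 * sigma_n^2 * real d)"
    using H ij r noise_norm_upper[OF ij] noise_coef_nonneg[of t i j r] rho_bound_nonneg
      inner_d_self_nonneg[of d "X i j"]
    unfolding noise_coefs_bounded_def by (intro mult_mono) auto
  also have "rho_bound * (3/2 * sigma_n^2 * real d) = 15 * lnT_cbrt"
    unfolding rho_bound_def using sigma_n_pos d_pos by simp
  finally have main: "noise_coef t i j r * inner_d d (X i j) (X i j) \<le> 15 * lnT_cbrt" .
  have "0 \<le> noise_coef t i j r * inner_d d (X i j) (X i j)"
    by (intro mult_nonneg_nonneg noise_coef_nonneg inner_d_self_nonneg)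
  then have "\<bar>y i * inner_d d (W t r) (X i j)\<bar> \<le> noise_slack + 15 * lnT_cbrt"
    using signed_inner_weight_noise_patch[OF ij r, of t] init cross main
    unfolding noise_slack_def by (simp only: abs_le_iff) linarith
  also have "\<dots> \<le> 16 * lnT_cbrt" using noise_slack_le_1 lnT_cbrt_ge_2 by simp
  finally show ?thesis using label_abs[OF i] by (simp add: abs_mult)
qed

lemma margin_eq_sum_cubes:
  assumes i: "i \<in> {1..N}"
  shows "y i * fnet m P d (W t) (Xa t i) =
    (\<Sum>r=1..m. \<Sum>p=1..P. (y i * inner_d d (W t r) (Xa t i p)) ^ 3)"
proof -
  have y3: "y i ^ 3 = y i" using label_sq[OF i] by (simp add: power3_eq_cube)
  show ?thesis
    unfolding fnet_eq_sum_cubes sum_distrib_left by (simp add: power_mult_distrib y3)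
qed

lemma signed_inner_adv_signal_lower:
  assumes i: "i \<in> {1..N}" and r: "r \<in> {1..m}"
  shows "- signal_slack \<le> y i * inner_d d (W t r) (Xa t i (s i))"
proof (cases "i \<in> SL")
  case True
  define c where "c = adv_scale t i"
  have c: "\<bar>c\<bar> < 1" unfolding c_def by (rule adv_scale_abs_lt_1[OF i])
  have "y i * inner_d d (W t r) (Xa t i (s i)) = (1 + c) * alpha * (y i * y i) * W t r 1"
    using inner_adv_signal_patch[OF i, of "W t r" t] True unfolding c_def by (simp add: algebra_simps)
  then have eq: "y i * inner_d d (W t r) (Xa t i (s i)) = (1 + c) * (alpha * W t r 1)"
    using label_sq[OF i] by simp
  show ?thesis
  proof (cases "0 \<le> W t r 1")
    case True
    then have "0 \<le> (1 + c) * (alpha * W t r 1)" using c alpha_pos by simp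
    then show ?thesis using eq signal_slack_nonneg by linarith
  next
    case False
    have "2 * (alpha * W t r 1) \<le> (1 + c) * (alpha * W t r 1)"
      using c False alpha_pos by (intro mult_right_mono_neg) (auto simp: mult_nonneg_nonpos)
    moreover have "alpha * W 0 r 1 \<le> alpha * W t r 1"
      using weight_coord_1_ge_init[OF r] alpha_pos by simp
    moreover have "- init_signal_bound \<le> W 0 r 1"
      using init_signal_le[OF r] by (simp add: abs_le_iff)
    then have "alpha * (- init_signal_bound) \<le> alpha * W 0 r 1"
      using alpha_pos by (intro mult_left_mono) auto
    moreover note alpha_init_signal_le
    ultimately show ?thesis using eq by simp
  qed
next
  case False
  have "y i * inner_d d (W t r) (Xa t i (s i)) = 0"
    using inner_adv_signal_patch[OF i, of "W t r" t] False weight_last_coord_zero[OF r] by simp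
  then show ?thesis using signal_slack_nonneg by linarith
qed

lemma signed_inner_adv_noise_lower:
  assumes H: "noise_coefs_bounded t" and i: "i \<in> {1..N}" and r: "r \<in> {1..m}"
    and p: "p \<in> {1..P}" "p \<noteq> s i"
  shows "- noise_slack \<le> y i * inner_d d (W t r) (Xa t i p)"
proof -
  have ip: "(i, p) \<in> noise_idx" using i p mem_noise_idx by auto
  have "0 \<le> noise_coef t i p r * inner_d d (X i p) (X i p)"
    by (intro mult_nonneg_nonneg noise_coef_nonneg inner_d_self_nonneg)
  moreover have "y i * inner_d d (W t r) (Xa t i p) = y i * inner_d d (W t r) (X i p)"
    using inner_adv_noise_patch[OF i p] by simp
  ultimately show ?thesis using signed_inner_noise_lower[OF H ip r] by linarith
qed

lemma cube_margin_term_lower: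
  assumes H: "noise_coefs_bounded t" and i: "i \<in> {1..N}" and r: "r \<in> {1..m}" and p: "p \<in> {1..P}"
  shows "- (noise_slack ^ 3 + signal_slack ^ 3) \<le> (y i * inner_d d (W t r) (Xa t i p)) ^ 3"
proof (cases "p = s i")
  case True
  have "(- signal_slack) ^ 3 \<le> (y i * inner_d d (W t r) (Xa t i p)) ^ 3"
    using signed_inner_adv_signal_lower[OF i r, of t] True by (intro power_mono_odd) auto
  moreover have "(- signal_slack) ^ 3 = - (signal_slack ^ 3)" by simp
  moreover have "0 \<le> noise_slack ^ 3" using noise_slack_nonneg by simp
  ultimately show ?thesis by linarith
next
  case False
  have "(- noise_slack) ^ 3 \<le> (y i * inner_d d (W t r) (Xa t i p)) ^ 3"
    using signed_inner_adv_noise_lower[OF H i r p False] by (intro power_mono_odd) auto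
  moreover have "(- noise_slack) ^ 3 = - (noise_slack ^ 3)" by simp
  moreover have "0 \<le> signal_slack ^ 3" using signal_slack_nonneg by simp
  ultimately show ?thesis by linarith
qed

lemma cube_margin_term_large:
  assumes H: "noise_coefs_bounded t" and ij: "(i, j) \<in> noise_idx" and r: "r \<in> {1..m}"
    and large: "rho_bound / 2 < noise_coef t i j r"
  shows "8 * ln (real T) \<le> (y i * inner_d d (W t r) (Xa t i j)) ^ 3"
proof -
  have ij': "i \<in> {1..N}" "j \<in> {1..P}" "j \<noteq> s i" using ij mem_noise_idx by auto
  have "rho_bound / 2 * (1/2 * sigma_n^2 * real d) \<le> noise_coef t i j r * inner_d d (X i j) (X i j)"
    using large noise_norm_lower[OF ij] rho_bound_nonneg sigma_n_pos by (intro mult_mono) auto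
  moreover have "rho_bound / 2 * (1/2 * sigma_n^2 * real d) = 5/2 * lnT_cbrt"
    unfolding rho_bound_def using sigma_n_pos d_pos by simp
  ultimately have "2 * lnT_cbrt \<le> y i * inner_d d (W t r) (X i j)"
    using signed_inner_noise_lower[OF H ij r] noise_slack_le_1 lnT_cbrt_ge_2 by linarith
  then have "2 * lnT_cbrt \<le> y i * inner_d d (W t r) (Xa t i j)"
    using inner_adv_noise_patch[OF ij'] by simp
  then have "(2 * lnT_cbrt) ^ 3 \<le> (y i * inner_d d (W t r) (Xa t i j)) ^ 3"
    using lnT_cbrt_ge_2 by (intro power_mono) auto
  moreover have "(2 * lnT_cbrt) ^ 3 = 8 * ln (real T)"
    using lnT_cbrt_cube by (simp add: power_mult_distrib)
  ultimately show ?thesis by simp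
qed

lemma margin_large:
  assumes H: "noise_coefs_bounded t" and ij: "(i, j) \<in> noise_idx" and r: "r \<in> {1..m}"
    and large: "rho_bound / 2 < noise_coef t i j r"
  shows "3 * ln (real T) \<le> y i * fnet m P d (W t) (Xa t i)"
proof -
  have i: "i \<in> {1..N}" and j: "j \<in> {1..P}" using ij mem_noise_idx by auto
  define E where "E = noise_slack ^ 3 + signal_slack ^ 3"
  define g where "g = (\<lambda>(r', p). (y i * inner_d d (W t r') (Xa t i p)) ^ 3)"
  have "8 * ln (real T) - real (card ({1..m} \<times> {1..P})) * E \<le> sum g ({1..m} \<times> {1..P})"
  proof (rule sum_ge_one_large_term)
    show "finite ({1..m} \<times> {1..P})" by simp
    show "(r, j) \<in> {1..m} \<times> {1..P}" using r j by simp
    show "- E \<le> g x" if "x \<in> {1..m} \<times> {1..P}" for x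
      using that cube_margin_term_lower[OF H i] unfolding g_def E_def by auto
    show "8 * ln (real T) \<le> g (r, j)"
      unfolding g_def using cube_margin_term_large[OF H ij r large] by simp
    show "0 \<le> E" unfolding E_def using noise_slack_nonneg signal_slack_nonneg by simp
  qed
  also have "sum g ({1..m} \<times> {1..P}) = y i * fnet m P d (W t) (Xa t i)"
    unfolding margin_eq_sum_cubes[OF i] g_def by (simp add: sum.cartesian_product)
  finally have "8 * ln (real T) - real m * real P * E \<le> y i * fnet m P d (W t) (Xa t i)" by simp
  then show ?thesis using slack_cubes_le ln_T_ge_20 unfolding E_def by linarith
qed

lemma loss_weight_small:
  assumes H: "noise_coefs_bounded t" and ij: "(i, j) \<in> noise_idx" and r: "r \<in> {1..m}"
    and large: "rho_bound / 2 < noise_coef t i j r"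
  shows "loss_weight t i \<le> 1 / real T ^ 3"
proof -
  have "loss_weight t i \<le> exp (- (y i * fnet m P d (W t) (Xa t i)))" by (rule psi_le_exp_neg)
  also have "\<dots> \<le> exp (- (3 * ln (real T)))" using margin_large[OF assms] by simp
  also have "exp (3 * ln (real T)) = exp (ln (real T)) ^ 3"
    using exp_of_nat_mult[of 3 "ln (real T)"] by simp
  then have "exp (- (3 * ln (real T))) = 1 / real T ^ 3"
    using T_pos by (simp add: exp_minus inverse_eq_divide)
  finally show ?thesis .
qed

lemma noise_coef_step_le:
  assumes H: "noise_coefs_bounded t" and ij: "(i, j) \<in> noise_idx" and r: "r \<in> {1..m}"
  shows "noise_coef (Suc t) i j r \<le> noise_coef t i j r +
     (if noise_coef t i j r \<le> rho_bound / 2 then rho_bound / 4 else late_increment)"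
proof -
  define Z where "Z = 3 * eta * (16 * lnT_cbrt)^2"
  have Z_nonneg: "0 \<le> Z" unfolding Z_def using eta_pos by simp
  have "\<bar>inner_d d (W t r) (X i j)\<bar> ^ 2 \<le> (16 * lnT_cbrt) ^ 2"
    using inner_noise_abs_le[OF H ij r] by (intro power_mono) auto
  then have sq: "inner_d d (W t r) (X i j) ^ 2 \<le> (16 * lnT_cbrt) ^ 2" by simp
  have "3 * eta / real N \<le> 3 * eta / 1" using N_pos eta_pos by (intro divide_left_mono) auto
  then have "3 * eta / real N * (loss_weight t i * inner_d d (W t r) (X i j) ^ 2) \<le>
      3 * eta * (loss_weight t i * (16 * lnT_cbrt) ^ 2)"
    using sq eta_pos psi_pos[of "y i * fnet m P d (W t) (Xa t i)"]
    by (intro mult_mono mult_left_mono) auto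
  then have incr: "noise_coef (Suc t) i j r \<le> noise_coef t i j r + Z * loss_weight t i"
    unfolding Z_def by (simp add: ac_simps)
  show ?thesis
  proof (cases "noise_coef t i j r \<le> rho_bound / 2")
    case True
    have "Z * loss_weight t i \<le> Z" using psi_le_one Z_nonneg by (simp add: mult_left_le)
    then show ?thesis using True incr early_increment_le unfolding Z_def by simp
  next
    case False
    have "Z * loss_weight t i \<le> Z * (1 / real T ^ 3)"
      using loss_weight_small[OF H ij r] False Z_nonneg by (intro mult_left_mono) auto
    then show ?thesis using False incr unfolding Z_def late_increment_def by simp
  qed
qed

lemma noise_coef_le_rho_bound:
  assumes "t \<le> T" "(i, j) \<in> noise_idx" "r \<in> {1..m}"
  shows "noise_coef t i j r \<le> rho_bound"
proof -
  define a where "a t x = noise_coef t (fst (fst x)) (snd (fst x)) (snd x)"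
    for t and x :: "(nat \<times> nat) \<times> nat"
  have "a t ((i, j), r) \<le> rho_bound"
  proof (rule bounded_if_slow_above_half[where a = a and I = "noise_idx \<times> {1..m}"
        and e = late_increment and T = T])
    show "a 0 x = 0" for x unfolding a_def by simp
    show "0 \<le> late_increment" by (rule late_increment_nonneg)
    show "real T * late_increment \<le> rho_bound / 4" by (rule late_increments_le)
    show "a (Suc t') x \<le> a t' x + (if a t' x \<le> rho_bound / 2 then rho_bound / 4 else late_increment)"
      if bounded: "\<And>x'. x' \<in> noise_idx \<times> {1..m} \<Longrightarrow> a t' x' \<le> rho_bound"
        and x: "x \<in> noise_idx \<times> {1..m}" for t' x
    proof -
      have "noise_coefs_bounded t'"
        unfolding noise_coefs_bounded_def
      proof (intro allI impI)
        fix k q r' assume "(k, q) \<in> noise_idx" "r' \<in> {1..m}"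
        then show "noise_coef t' k q r' \<le> rho_bound"
          using bounded[of "((k, q), r')"] unfolding a_def by simp
      qed
      moreover have "(fst (fst x), snd (fst x)) \<in> noise_idx" "snd x \<in> {1..m}" using x by auto
      ultimately show ?thesis unfolding a_def by (rule noise_coef_step_le)
    qed
  qed (use assms in auto)
  then show ?thesis unfolding a_def by simp
qed

end

theorem lemmaF8:
  "\<exists>C0 > 0. \<forall>C \<ge> C0.
     \<forall>(N::nat) (P::nat) (d::nat) (m::nat) (alpha::real) (sigma_n::real) (sigma_0::real)
      (eta::real) (eps::real) (Gam::real) (delta::real) (T::nat)
      (SL::nat set) (SU::nat set) (y::nat \<Rightarrow> real) (s::nat \<Rightarrow> nat)
      (X::nat \<Rightarrow> nat \<Rightarrow> nat \<Rightarrow> real) (W::nat \<Rightarrow> nat \<Rightarrow> nat \<Rightarrow> real)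
      (Xa::nat \<Rightarrow> nat \<Rightarrow> nat \<Rightarrow> nat \<Rightarrow> real).
       alpha > 0 \<and> sigma_n > 0 \<and> sigma_0 > 0 \<and> eta > 0 \<and> eps > 0 \<and> Gam > 0 \<and>
       0 < delta \<and> delta < 1 \<and>
       param_conditions C N P d m alpha sigma_n sigma_0 eta eps Gam delta T
         (real (card SU) / real N) \<and>
       data_model N P d alpha SL SU y s X \<and>
       eventE N P d m sigma_n sigma_0 delta y s X (W 0) \<and>
       adv_training N P d m eta eps y s X W Xa
       \<longrightarrow>
       (\<forall>t \<le> T. \<forall>r \<in> {1..m}. \<forall>i \<in> {1..N}. \<forall>j \<in> {1..P}. j \<noteq> s i \<longrightarrow>
          rho N P d m eta y X W Xa t i j r
            \<le> 10 * ln (real T) powr (1/3) / (sigma_n^2 * real d))"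
  apply (intro exI[of _ "10^12"] conjI allI impI ballI)
   apply simp
  subgoal premises prems for C N P d m alpha sigma_n sigma_0 eta eps Gam delta T SL SU y s X W Xa t r i j
  proof -
    interpret adv_training_run C N P d m alpha sigma_n sigma_0 eta eps Gam delta T
        "real (card SU) / real N" SL SU y s X W Xa
      by unfold_locales (use prems in auto)
    have "(i, j) \<in> noise_idx" using prems by (simp add: mem_noise_idx)
    then show ?thesis
      using noise_coef_le_rho_bound prems unfolding rho_bound_def lnT_cbrt_def by simp
  qed
  done

end
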